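(* The Hopf algebra $(dWHA,m,\mu)$ is selfdual with respect to the bilinear form $\langle\cdot,\cdot\rangle$ defined on substitutions by $\left\langle \binom{\rho}{\sigma},\binom{\rho'}{\sigma'}\right\rangle=1$ if after a renaming of letters one has $\rho=\sigma'$ and $\rho'=\sigma$, and $=0$ otherwise. That is, for all substitutions $p,p',p''$: $\langle m(p\otimes p'),p''\rangle=\langle p\otimes p',\mu(p'')\rangle$, where $\langle a\otimes b,c\otimes d\rangle=\langle a,c\rangle\langle b,d\rangle$.
   Context: Words are finite sequences of letters; $*$ denotes concatenation; the support $\mathrm{supp}(\alpha)$ of a word is the set of letters occurring in it. The shuffle product $\alpha\times_{sh}\beta$ of words $\alpha=[c_1,\dots,c_p]$, $\beta=[d_1,\dots,d_q]$ is the sum, with multiplicities, over all ways of choosing $p$ of the $p+q$ positions, of the word obtained by placing the $c$'s in their original order in the chosen positions and the $d$'s in their original order in the remaining ones. A subword of $[a_1,\dots,a_m]$ is a word $[a_{i_1},\dots,a_{i_r}]$ with $i_1<\dots<i_r$. Definition of $dWHA$: Let $\mathcal X$ be a countably infinite alphabet. A substitution is a pair $p=\binom{\rho}{\sigma}$ of words over $\mathcal X$ with $\mathrm{supp}(\rho)=\mathrm{supp}(\sigma)$, considered up to simultaneously renaming the letters of both words by a bijection of $\mathcal X$. $dWHA$ is the free abelian group with basis all substitutions (including the empty substitution $\binom{[\,]}{[\,]}$), graded by $\deg(p)=\#\mathrm{supp}(\rho)$. Multiplication: for substitutions $p=\binom{\rho}{\sigma}$, $p'=\binom{\rho'}{\sigma'}$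 written with $\mathrm{supp}(\rho)\cap\mathrm{supp}(\rho')=\emptyset$, $m(p\otimes p')=\binom{\rho*\rho'}{\sigma\times_{sh}\sigma'}$, meaning the sum of $\binom{\rho*\rho'}{\gamma}$ over the terms $\gamma$ (with multiplicity) of $\sigma\times_{sh}\sigma'$. The unit is the empty substitution. A good cut of a word $\sigma$ is a factorization $\sigma=\sigma_1*\sigma_2$ with $\mathrm{supp}(\sigma_1)\cap\mathrm{supp}(\sigma_2)=\emptyset$ (the two trivial cuts included). Comultiplication: $\mu(p)=\sum \binom{p^{-1}(\sigma_1)}{\sigma_1}\otimes\binom{p^{-1}(\sigma_2)}{\sigma_2}$, summed over all good cuts $\sigma=\sigma_1*\sigma_2$, where $p^{-1}(\sigma_i)$ is the subword of $\rho$ consisting of all occurrences in $\rho$ of letters of $\mathrm{supp}(\sigma_i)$. Counit: $\varepsilon$ is $1$ on the empty substitution and $0$ on all other substitutions. This is a Hopf algebra. *)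

theory Defs
  imports Main
begin

text \<open>A substitution is represented by a pair (rho, sigma) of words with equal support;
  substitutions are considered up to simultaneous renaming by a bijection of the alphabet.
  All notions below are invariant under such renamings.\<close>

type_synonym word = "nat list"
type_synonym subst = "word \<times> word"

definition is_subst :: "subst \<Rightarrow> bool" where
  "is_subst p \<longleftrightarrow> set (fst p) = set (snd p)"

text \<open>Shuffle product with multiplicities: the list of all words obtained by choosing
  positions (one entry per choice of positions).\<close>
fun shuffle :: "'a list \<Rightarrow> 'a list \<Rightarrow> 'a list list" where
  "shuffle [] ys = [ys]"
| "shuffle xs [] = [xs]"
| "shuffle (x # xs) (y # ys) =
     map ((#) x) (shuffle xs (y # ys)) @ map ((#) y) (shuffle (x # xs) ys)"

text \<open>Product m(p \<otimes> p'): representatives are first renamed to have disjoint supports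
  (even letters for p, odd letters for p'); the result is a formal sum of substitutions,
  given as a list of basis terms (with multiplicity).\<close>
definition mult_terms :: "subst \<Rightarrow> subst \<Rightarrow> subst list" where
  "mult_terms p p' =
     (let r = map (\<lambda>x. 2 * x) (fst p); s = map (\<lambda>x. 2 * x) (snd p);
          r' = map (\<lambda>x. 2 * x + 1) (fst p'); s' = map (\<lambda>x. 2 * x + 1) (snd p')
      in map (\<lambda>g. (r @ r', g)) (shuffle s s'))"

definition good_cuts :: "word \<Rightarrow> nat list" where
  "good_cuts s = filter (\<lambda>i. set (take i s) \<inter> set (drop i s) = {}) [0..<Suc (length s)]"

definition preimage_word :: "word \<Rightarrow> word \<Rightarrow> word" where
  "preimage_word r s1 = filter (\<lambda>x. x \<in> set s1) r"

definition coprod_terms :: "subst \<Rightarrow> (subst \<times> subst) list" where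
  "coprod_terms p =
     map (\<lambda>i. let s1 = take i (snd p); s2 = drop i (snd p) in
               ((preimage_word (fst p) s1, s1), (preimage_word (fst p) s2, s2)))
       (good_cuts (snd p))"

definition pairing :: "subst \<Rightarrow> subst \<Rightarrow> int" where
  "pairing p p' =
     (if \<exists>f::nat \<Rightarrow> nat. bij f \<and> map f (fst p) = snd p' \<and> map f (snd p) = fst p' then 1 else 0)"

definition pairing_left_sum :: "subst list \<Rightarrow> subst \<Rightarrow> int" where
  "pairing_left_sum xs q = sum_list (map (\<lambda>t. pairing t q) xs)"

definition pairing_tensor_sum :: "subst \<Rightarrow> subst \<Rightarrow> (subst \<times> subst) list \<Rightarrow> int" where
  "pairing_tensor_sum p p' ts = sum_list (map (\<lambda>(a, b). pairing p a * pairing p' b) ts)"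

end

theory Submission
  imports Defs "HOL-Combinatorics.Transposition"
begin

text \<open>Take p = (rho, sigma) and p' = (rho', sigma') with disjoint supports. A product term
  (rho rho', gamma) pairs with (R, S) iff an injective renaming f maps rho rho' to S and gamma
  to R. By injectivity, cutting S after |rho| letters is a good cut, and restricting f pairs p
  and p' with the two halves of the corresponding coproduct term. Conversely, renamings of the
  two halves glue to one injective renaming because the halves have disjoint supports, and R is
  then the image of a shuffle of sigma and sigma'. Both sides are 0 or 1: the renaming
  determines gamma, and only the cut at |rho| has the right length.\<close>

lemma shuffle_Nil2 [simp]: "shuffle xs [] = [xs]"
  by (cases xs) auto

lemma shuffle_map: "shuffle (map f xs) (map f ys) = map (map f) (shuffle xs ys)"
  by (induction xs ys rule: shuffle.induct) auto

lemma set_shuffle: "zs \<in> set (shuffle xs ys) \<Longrightarrow> set zs = set xs \<union> set ys"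
  by (induction xs ys arbitrary: zs rule: shuffle.induct) auto

lemma distinct_shuffle: "set xs \<inter> set ys = {} \<Longrightarrow> distinct (shuffle xs ys)"
  by (induction xs ys rule: shuffle.induct) (auto simp: distinct_map)

lemma Cons_in_shuffle_left: "zs \<in> set (shuffle xs ys) \<Longrightarrow> a # zs \<in> set (shuffle (a # xs) ys)"
  by (cases ys) auto

lemma Cons_in_shuffle_right: "zs \<in> set (shuffle xs ys) \<Longrightarrow> a # zs \<in> set (shuffle xs (a # ys))"
  by (cases xs) auto

lemma filter_in_shuffle:
  "zs \<in> set (shuffle xs ys) \<Longrightarrow> filter P zs \<in> set (shuffle (filter P xs) (filter P ys))"
proof (induction xs ys arbitrary: zs rule: shuffle.induct)
  case (3 x xs y ys)
  from "3.prems" consider z where "z \<in> set (shuffle xs (y # ys))" "zs = x # z"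
    | z where "z \<in> set (shuffle (x # xs) ys)" "zs = y # z"
    by auto
  then show ?case
  proof cases
    case 1
    with "3.IH"(1) show ?thesis by (cases "P x") (auto intro: Cons_in_shuffle_left)
  next
    case 2
    with "3.IH"(2) show ?thesis by (cases "P y") (auto intro: Cons_in_shuffle_right)
  qed
qed auto

lemma shuffle_filter_partition: "zs \<in> set (shuffle (filter P zs) (filter (\<lambda>x. \<not> P x) zs))"
  by (induction zs) (auto intro: Cons_in_shuffle_left Cons_in_shuffle_right)

lemma preimage_word_shuffle_left:
  assumes "zs \<in> set (shuffle xs ys)" "set xs \<inter> set ys = {}"
  shows "preimage_word zs xs = xs"
proof -
  have "filter (\<lambda>x. x \<in> set xs) ys = []" using assms(2) by (auto simp: filter_empty_conv)
  then show ?thesis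
    using filter_in_shuffle[OF assms(1), of "\<lambda>x. x \<in> set xs"] by (simp add: preimage_word_def)
qed

lemma preimage_word_shuffle_right:
  assumes "zs \<in> set (shuffle xs ys)" "set xs \<inter> set ys = {}"
  shows "preimage_word zs ys = ys"
proof -
  have "filter (\<lambda>x. x \<in> set ys) xs = []" using assms(2) by (auto simp: filter_empty_conv)
  then show ?thesis
    using filter_in_shuffle[OF assms(1), of "\<lambda>x. x \<in> set ys"] by (simp add: preimage_word_def)
qed

lemma preimage_word_map:
  "inj_on f (set xs \<union> set ys) \<Longrightarrow> preimage_word (map f xs) (map f ys) = map f (preimage_word xs ys)"
  unfolding preimage_word_def filter_map
  by (intro arg_cong[where f = "map f"] filter_cong) (auto simp: inj_on_image_mem_iff)

lemma good_cuts_iff: "i \<in> set (good_cuts S) \<longleftrightarrow> i \<le> length S \<and> set (take i S) \<inter> set (drop i S) = {}"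
  unfolding good_cuts_def by auto

lemma finite_inj_on_extends_to_bij:
  fixes h :: "'a \<Rightarrow> 'a"
  assumes "finite A" "inj_on h A"
  shows "\<exists>F. bij F \<and> (\<forall>x\<in>A. F x = h x)"
  using assms
proof (induction A rule: finite_induct)
  case empty
  show ?case using bij_id by (metis empty_iff)
next
  case (insert a A)
  then obtain F where F: "bij F" "\<forall>x\<in>A. F x = h x" by auto
  define G where "G = transpose (F a) (h a) \<circ> F"
  have "G x = h x" if "x \<in> A" for x
  proof -
    have "h x \<noteq> h a" using insert.prems insert.hyps(2) that by (metis inj_onD insert_iff)
    moreover have "h x \<noteq> F a" using F insert.hyps(2) that by (metis bij_is_inj inj_eq)
    ultimately show ?thesis using F(2) that by (simp add: G_def)
  qed
  moreover have "G a = h a" by (simp add: G_def)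
  moreover have "bij G" using F(1) by (simp add: G_def bij_comp)
  ultimately show ?case by auto
qed

definition paired :: "subst \<Rightarrow> subst \<Rightarrow> bool" where
  "paired p q \<longleftrightarrow>
     (\<exists>f. inj_on f (set (fst p) \<union> set (snd p)) \<and> map f (fst p) = snd q \<and> map f (snd p) = fst q)"

lemma pairing_eq_of_bool_paired: "pairing p q = of_bool (paired p q)"
proof -
  have "(\<exists>f::nat \<Rightarrow> nat. bij f \<and> map f (fst p) = snd q \<and> map f (snd p) = fst q) \<longleftrightarrow> paired p q"
  proof
    assume "\<exists>f::nat \<Rightarrow> nat. bij f \<and> map f (fst p) = snd q \<and> map f (snd p) = fst q"
    then show "paired p q" unfolding paired_def by (meson bij_is_inj inj_on_subset subset_UNIV)
  next
    assume "paired p q"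
    then obtain f where f: "inj_on f (set (fst p) \<union> set (snd p))"
      "map f (fst p) = snd q" "map f (snd p) = fst q"
      unfolding paired_def by blast
    obtain F where "bij F" "\<forall>x\<in>set (fst p) \<union> set (snd p). F x = f x"
      using finite_inj_on_extends_to_bij[OF _ f(1)] by blast
    with f show "\<exists>F::nat \<Rightarrow> nat. bij F \<and> map F (fst p) = snd q \<and> map F (snd p) = fst q"
      by (metis (no_types, lifting) Un_iff map_eq_conv)
  qed
  then show ?thesis unfolding pairing_def by simp
qed

lemma paired_length: "paired p q \<Longrightarrow> length (snd q) = length (fst p)"
  unfolding paired_def by (metis length_map)

lemma paired_map_self: "inj_on f (set \<rho> \<union> set \<sigma>) \<Longrightarrow> paired (\<rho>, \<sigma>) (map f \<sigma>, map f \<rho>)"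
  unfolding paired_def by auto

lemma paired_unique:
  assumes "paired (r, g1) q" "paired (r, g2) q" "set g1 \<subseteq> set r" "set g2 \<subseteq> set r"
  shows "g1 = g2"
proof -
  obtain f1 where f1: "inj_on f1 (set r)" "map f1 r = snd q" "map f1 g1 = fst q"
    using assms(1,3) unfolding paired_def by (auto simp: Un_absorb2)
  obtain f2 where f2: "map f2 r = snd q" "map f2 g2 = fst q"
    using assms(2) unfolding paired_def by auto
  have "\<forall>x\<in>set r. f1 x = f2 x" using f1(2) f2(1) by (metis map_eq_conv)
  then have "map f1 g2 = map f1 g1" using assms(4) f1(3) f2(2) by (metis map_eq_conv subsetD)
  then show ?thesis
    using inj_on_map_eq_map inj_on_subset[OF f1(1)] assms(3,4) by (metis Un_least)
qed

lemma paired_rename_iff: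
  assumes "inj e"
  shows "paired (map e \<rho>, map e \<sigma>) q \<longleftrightarrow> paired (\<rho>, \<sigma>) q"
proof
  assume "paired (map e \<rho>, map e \<sigma>) q"
  then obtain f where "inj_on f (e ` (set \<rho> \<union> set \<sigma>))" "map (f \<circ> e) \<rho> = snd q" "map (f \<circ> e) \<sigma> = fst q"
    unfolding paired_def by (auto simp: image_Un)
  moreover have "inj_on (f \<circ> e) (set \<rho> \<union> set \<sigma>)"
    using calculation(1) assms by (auto intro: comp_inj_on inj_on_subset)
  ultimately show "paired (\<rho>, \<sigma>) q" unfolding paired_def by auto
next
  assume "paired (\<rho>, \<sigma>) q"
  then obtain f where f: "inj_on f (set \<rho> \<union> set \<sigma>)" "map f \<rho> = snd q" "map f \<sigma> = fst q"
    unfolding paired_def by auto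
  have "f \<circ> inv e \<circ> e = f" using assms by (simp add: fun_eq_iff)
  then have "inj_on (f \<circ> inv e) (e ` (set \<rho> \<union> set \<sigma>))" "map (f \<circ> inv e) (map e \<rho>) = snd q"
    "map (f \<circ> inv e) (map e \<sigma>) = fst q"
    using f by (auto intro: inj_on_imageI simp del: o_apply)
  then show "paired (map e \<rho>, map e \<sigma>) q" unfolding paired_def by (auto simp: image_Un)
qed

lemma sum_list_of_bool_at_most_one:
  assumes "distinct xs" "\<And>x y. x \<in> set xs \<Longrightarrow> y \<in> set xs \<Longrightarrow> P x \<Longrightarrow> P y \<Longrightarrow> x = y"
  shows "(\<Sum>x\<leftarrow>xs. of_bool (P x)) = (of_bool (\<exists>x\<in>set xs. P x) :: 'b :: semiring_1)"
  using assms by (induction xs) auto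

lemma sum_list_single_nonzero:
  assumes "distinct xs" "\<And>x. x \<in> set xs \<Longrightarrow> x \<noteq> k \<Longrightarrow> h x = (0 :: 'b :: monoid_add)"
  shows "(\<Sum>x\<leftarrow>xs. h x) = (if k \<in> set xs then h k else 0)"
  using assms
proof (induction xs)
  case (Cons a xs)
  then show ?case by (cases "a = k") auto
qed simp

lemma paired_shuffle_imp_good_cut:
  assumes "set \<sigma> = set \<rho>" "set \<sigma>' = set \<rho>'" "set \<rho> \<inter> set \<rho>' = {}"
    and "g \<in> set (shuffle \<sigma> \<sigma>')" "paired (\<rho> @ \<rho>', g) (R, S)"
  defines "n \<equiv> length \<rho>"
  shows "n \<in> set (good_cuts S)"
    and "paired (\<rho>, \<sigma>) (preimage_word R (take n S), take n S)"
    and "paired (\<rho>', \<sigma>') (preimage_word R (drop n S), drop n S)"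
proof -
  have set_g: "set g = set \<rho> \<union> set \<rho>'" using set_shuffle[OF assms(4)] assms(1,2) by simp
  obtain f where inj: "inj_on f (set \<rho> \<union> set \<rho>')" and S: "S = map f \<rho> @ map f \<rho>'"
    and R: "R = map f g"
    using assms(5) set_g unfolding paired_def by auto
  have take: "take n S = map f \<rho>" and drop: "drop n S = map f \<rho>'" by (simp_all add: S n_def)
  have "f ` set \<rho> \<inter> f ` set \<rho>' = {}" using inj_on_image_Int[OF inj] assms(3) by auto
  then show "n \<in> set (good_cuts S)" by (simp add: good_cuts_iff take drop) (simp add: S n_def)
  have "preimage_word R (take n S) = map f (preimage_word g \<rho>)"
    using inj set_g by (simp add: R take preimage_word_map Un_absorb2)
  also have "preimage_word g \<rho> = \<sigma>"
    using preimage_word_shuffle_left[OF assms(4)] assms(1-3) by (simp add: preimage_word_def)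
  finally show "paired (\<rho>, \<sigma>) (preimage_word R (take n S), take n S)"
    using inj assms(1) by (simp add: take paired_map_self inj_on_subset)
  have "preimage_word R (drop n S) = map f (preimage_word g \<rho>')"
    using inj set_g by (simp add: R drop preimage_word_map Un_absorb2)
  also have "preimage_word g \<rho>' = \<sigma>'"
    using preimage_word_shuffle_right[OF assms(4)] assms(1-3) by (simp add: preimage_word_def)
  finally show "paired (\<rho>', \<sigma>') (preimage_word R (drop n S), drop n S)"
    using inj assms(2) by (simp add: drop paired_map_self inj_on_subset)
qed

lemma good_cut_imp_paired_shuffle:
  assumes "set \<sigma> = set \<rho>" "set \<sigma>' = set \<rho>'" "set \<rho> \<inter> set \<rho>' = {}" "set R = set S"
  defines "n \<equiv> length \<rho>"
  assumes "n \<in> set (good_cuts S)"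
    and "paired (\<rho>, \<sigma>) (preimage_word R (take n S), take n S)"
    and "paired (\<rho>', \<sigma>') (preimage_word R (drop n S), drop n S)"
  shows "\<exists>g\<in>set (shuffle \<sigma> \<sigma>'). paired (\<rho> @ \<rho>', g) (R, S)"
proof -
  obtain h1 where h1: "inj_on h1 (set \<rho>)" "map h1 \<rho> = take n S"
    "map h1 \<sigma> = preimage_word R (take n S)"
    using assms(7) assms(1) unfolding paired_def by auto
  obtain h2 where h2: "inj_on h2 (set \<rho>')" "map h2 \<rho>' = drop n S"
    "map h2 \<sigma>' = preimage_word R (drop n S)"
    using assms(8) assms(2) unfolding paired_def by auto
  have cut: "set (take n S) \<inter> set (drop n S) = {}" using assms(6) good_cuts_iff by blast
  define f where "f x = (if x \<in> set \<rho> then h1 x else h2 x)" for x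
  have "map f \<rho> = map h1 \<rho>" "map f \<sigma> = map h1 \<sigma>" "map f \<rho>' = map h2 \<rho>'" "map f \<sigma>' = map h2 \<sigma>'"
    using assms(1-3) by (auto simp: f_def)
  with h1 h2 have f: "map f \<rho> = take n S" "map f \<rho>' = drop n S"
    "map f \<sigma> = preimage_word R (take n S)" "map f \<sigma>' = preimage_word R (drop n S)"
    by simp_all
  have "inj_on f (set \<rho>)" using h1(1) by (subst inj_on_cong[of _ f h1]) (simp_all add: f_def)
  moreover have "inj_on f (set \<rho>')" using h2(1)
    by (subst inj_on_cong[of _ f h2]) (use assms(3) in \<open>auto simp: f_def\<close>)
  moreover have "f ` set \<rho> \<inter> f ` set \<rho>' = {}"
    using cut by (simp flip: f(1,2))
  ultimately have inj: "inj_on f (set \<rho> \<union> set \<rho>')" by (auto simp: inj_on_Un)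
  have "preimage_word R (drop n S) = filter (\<lambda>x. x \<notin> set (take n S)) R"
  proof -
    have "set R = set (take n S) \<union> set (drop n S)"
      using assms(4) by (metis append_take_drop_id set_append)
    with cut show ?thesis unfolding preimage_word_def by (intro filter_cong) auto
  qed
  then have "R \<in> set (shuffle (preimage_word R (take n S)) (preimage_word R (drop n S)))"
    using shuffle_filter_partition by (simp add: preimage_word_def)
  then obtain g where g: "g \<in> set (shuffle \<sigma> \<sigma>')" "map f g = R"
    by (auto simp flip: f(3,4) simp: shuffle_map)
  have "set g = set \<rho> \<union> set \<rho>'" using set_shuffle[OF g(1)] assms(1,2) by simp
  with inj g f(1,2) have "paired (\<rho> @ \<rho>', g) (R, S)" unfolding paired_def by auto
  with g(1) show ?thesis by blast
qed

lemma pairing_shuffle_eq_coprod: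
  assumes "set \<sigma> = set \<rho>" "set \<sigma>' = set \<rho>'" "set \<rho> \<inter> set \<rho>' = {}" "set R = set S"
  shows "pairing_left_sum (map (\<lambda>g. (\<rho> @ \<rho>', g)) (shuffle \<sigma> \<sigma>')) (R, S) =
         pairing_tensor_sum (\<rho>, \<sigma>) (\<rho>', \<sigma>') (coprod_terms (R, S))"
proof -
  define n where "n = length \<rho>"
  define T where "T i = pairing (\<rho>, \<sigma>) (preimage_word R (take i S), take i S) *
    pairing (\<rho>', \<sigma>') (preimage_word R (drop i S), drop i S)" for i
  have "pairing_left_sum (map (\<lambda>g. (\<rho> @ \<rho>', g)) (shuffle \<sigma> \<sigma>')) (R, S) =
        (\<Sum>g\<leftarrow>shuffle \<sigma> \<sigma>'. of_bool (paired (\<rho> @ \<rho>', g) (R, S)))"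
    by (simp add: pairing_left_sum_def pairing_eq_of_bool_paired comp_def)
  also have "\<dots> = of_bool (\<exists>g\<in>set (shuffle \<sigma> \<sigma>'). paired (\<rho> @ \<rho>', g) (R, S))"
  proof (rule sum_list_of_bool_at_most_one)
    show "distinct (shuffle \<sigma> \<sigma>')" using assms(1-3) by (simp add: distinct_shuffle)
    show "g1 = g2" if "g1 \<in> set (shuffle \<sigma> \<sigma>')" "g2 \<in> set (shuffle \<sigma> \<sigma>')"
      "paired (\<rho> @ \<rho>', g1) (R, S)" "paired (\<rho> @ \<rho>', g2) (R, S)" for g1 g2
      using paired_unique that set_shuffle assms(1,2) by (metis set_append order_refl)
  qed
  also have "\<dots> = (if n \<in> set (good_cuts S) then T n else 0)"
    using paired_shuffle_imp_good_cut[OF assms(1-3)] good_cut_imp_paired_shuffle[OF assms]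
    by (auto simp: T_def n_def pairing_eq_of_bool_paired)
  also have "\<dots> = (\<Sum>i\<leftarrow>good_cuts S. T i)"
  proof (rule sum_list_single_nonzero[symmetric])
    show "distinct (good_cuts S)" by (simp add: good_cuts_def)
    show "T i = 0" if "i \<in> set (good_cuts S)" "i \<noteq> n" for i
    proof -
      have "length (take i S) \<noteq> length \<rho>" using that by (auto simp: good_cuts_iff n_def)
      then show ?thesis using paired_length by (force simp: T_def pairing_eq_of_bool_paired)
    qed
  qed
  also have "\<dots> = pairing_tensor_sum (\<rho>, \<sigma>) (\<rho>', \<sigma>') (coprod_terms (R, S))"
    by (simp add: pairing_tensor_sum_def coprod_terms_def T_def comp_def Let_def)
  finally show ?thesis .
qed

lemma pairing_rename:
  "inj e \<Longrightarrow> pairing (map e \<rho>, map e \<sigma>) q = pairing (\<rho>, \<sigma>) q"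
  by (simp add: pairing_eq_of_bool_paired paired_rename_iff)

theorem theorem7p11:
  fixes p p' p'' :: subst
  assumes "is_subst p" and "is_subst p'" and "is_subst p''"
  shows "pairing_left_sum (mult_terms p p') p'' = pairing_tensor_sum p p' (coprod_terms p'')"
proof -
  obtain \<rho> \<sigma> \<rho>' \<sigma>' R S where p: "p = (\<rho>, \<sigma>)" and p': "p' = (\<rho>', \<sigma>')" and p'': "p'' = (R, S)"
    by (cases p, cases p', cases p'')
  define e0 e1 :: "nat \<Rightarrow> nat" where "e0 = (\<lambda>x. 2 * x)" and "e1 = (\<lambda>x. 2 * x + 1)"
  have inj: "inj e0" "inj e1" by (auto simp: e0_def e1_def inj_def)
  have disjoint: "set (map e0 \<rho>) \<inter> set (map e1 \<rho>') = {}" by (auto simp: e0_def e1_def) presburger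
  have "pairing_left_sum (mult_terms p p') p'' =
        pairing_left_sum (map (\<lambda>g. (map e0 \<rho> @ map e1 \<rho>', g)) (shuffle (map e0 \<sigma>) (map e1 \<sigma>'))) (R, S)"
    by (simp add: mult_terms_def p p' p'' e0_def e1_def)
  also have "\<dots> = pairing_tensor_sum (map e0 \<rho>, map e0 \<sigma>) (map e1 \<rho>', map e1 \<sigma>') (coprod_terms (R, S))"
    using assms disjoint by (intro pairing_shuffle_eq_coprod) (simp_all add: is_subst_def p p' p'')
  also have "\<dots> = pairing_tensor_sum p p' (coprod_terms p'')"
    by (simp add: pairing_tensor_sum_def pairing_rename inj p p' p'')
  finally show ?thesis .
qed

end
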